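(* Let $n\ge 2$ and let $C$ be a self-locating-dominating code in $P_n\square P_2$. Then $(v_1,1),(v_1,2),(v_n,1),(v_n,2)\in C$ and $|C|\ge n+1$.
   Context: $P_n$ is the path with vertex set $\{v_1,\dots,v_n\}$ and edges $v_iv_{i+1}$ ($1\le i\le n-1$); $P_2$ is the path on vertex set $\{1,2\}$. The Cartesian product $G\square H$ has vertex set $V(G)\times V(H)$, with $(u,v)$ adjacent to $(u',v')$ iff either $u=u'$ and $vv'\in E(H)$, or $uu'\in E(G)$ and $v=v'$. For a vertex $u$, $N[u]$ is its closed neighbourhood. A code is a non-empty subset $C$ of the vertex set $V$; $I(C;u)=N[u]\cap C$. A code $C$ is self-locating-dominating if for every $u\in V\setminus C$ we have $I(C;u)\neq\emptyset$ and $\bigcap_{c\in I(C;u)}N[c]=\{u\}$. *)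

theory Defs
  imports Main
begin

text \<open>The grid P_n box P_2: vertex (i,j) stands for (v_i, j), with 1 <= i <= n and j in {1,2}.\<close>

definition grid_vertices :: "nat \<Rightarrow> (nat \<times> nat) set" where
  "grid_vertices n = {1..n} \<times> {1..2}"

definition path_adj :: "nat \<Rightarrow> nat \<Rightarrow> bool" where
  "path_adj a b \<longleftrightarrow> a = b + 1 \<or> b = a + 1"

definition grid_adj :: "nat \<Rightarrow> nat \<times> nat \<Rightarrow> nat \<times> nat \<Rightarrow> bool" where
  "grid_adj n u w \<longleftrightarrow> u \<in> grid_vertices n \<and> w \<in> grid_vertices n \<and>
     ((fst u = fst w \<and> path_adj (snd u) (snd w)) \<or> (path_adj (fst u) (fst w) \<and> snd u = snd w))"

definition closed_nbhd :: "nat \<Rightarrow> nat \<times> nat \<Rightarrow> (nat \<times> nat) set" where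
  "closed_nbhd n u = {w \<in> grid_vertices n. w = u \<or> grid_adj n u w}"

definition I_set :: "nat \<Rightarrow> (nat \<times> nat) set \<Rightarrow> nat \<times> nat \<Rightarrow> (nat \<times> nat) set" where
  "I_set n C u = closed_nbhd n u \<inter> C"

definition self_locating_dominating :: "nat \<Rightarrow> (nat \<times> nat) set \<Rightarrow> bool" where
  "self_locating_dominating n C \<longleftrightarrow> C \<noteq> {} \<and> C \<subseteq> grid_vertices n \<and>
     (\<forall>u \<in> grid_vertices n - C. I_set n C u \<noteq> {} \<and>
        (\<Inter>c \<in> I_set n C u. closed_nbhd n c) = {u})"

end

theory Submission
  imports Defs
begin

text \<open>If a non-codeword u had a non-codeword neighbour in its own row, then every codeword
  around u would also dominate the vertex diagonally across from u on the other side (or, at an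
  end of the path, the vertex beside u in the other row), so u would not be located. Hence each
  row of a self-locating-dominating code contains both end vertices and no two consecutive
  non-codewords, which forces at least (n + 1)/2 codewords per row.\<close>

lemma mem_grid_vertices_iff [simp]:
  "(i, j) \<in> grid_vertices n \<longleftrightarrow> 1 \<le> i \<and> i \<le> n \<and> (j = 1 \<or> j = 2)"
  by (auto simp: grid_vertices_def)

lemma grid_adj_iff:
  "grid_adj n (i, j) (a, b) \<longleftrightarrow> (i, j) \<in> grid_vertices n \<and> (a, b) \<in> grid_vertices n \<and>
     ((a = i \<and> b \<noteq> j) \<or> ((a = i + 1 \<or> i = a + 1) \<and> b = j))"
  unfolding grid_adj_def path_adj_def mem_grid_vertices_iff fst_conv snd_conv by arith

lemma mem_closed_nbhd_iff:
  "w \<in> closed_nbhd n u \<longleftrightarrow> w \<in> grid_vertices n \<and> (w = u \<or> grid_adj n u w)"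
  by (simp add: closed_nbhd_def)

lemma sld_codeword_separates:
  assumes "self_locating_dominating n C" "u \<in> grid_vertices n" "u \<notin> C" "w \<noteq> u"
  obtains c where "c \<in> I_set n C u" "w \<notin> closed_nbhd n c"
proof -
  have "(\<Inter>c \<in> I_set n C u. closed_nbhd n c) = {u}"
    using assms(1-3) by (simp add: self_locating_dominating_def)
  with \<open>w \<noteq> u\<close> show thesis using that by blast
qed

text \<open>For i = 1 the truncated i - 1 is 0, so the lemma then puts the off-grid vertex (0, j)
  into C; this impossibility is what forces the ends of each row into the code.\<close>

lemma sld_row_neighbour_in_code:
  assumes sld: "self_locating_dominating n C"
    and u: "(i, j) \<in> grid_vertices n" and nu: "(i, j) \<notin> C"
    and i': "i' = i - 1 \<or> i' = i + 1"
  shows "(i', j) \<in> C"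
proof (rule ccontr)
  assume ni': "(i', j) \<notin> C"
  obtain j' where j': "j' \<noteq> j" "j' = 1 \<or> j' = 2" using u by fastforce
  define k where "k = 2 * i - i'" \<comment> \<open>the row neighbour of i opposite to i'\<close>
  have k: "k = i + 1 \<or> i = k + 1" using i' u by (auto simp: k_def)
  define w where "w = (if (k, j') \<in> grid_vertices n then (k, j') else (i, j'))"
  have "w \<noteq> (i, j)" using j' by (simp add: w_def)
  with sld_codeword_separates[OF sld u nu] obtain a b
    where "(a, b) \<in> I_set n C (i, j)" and wN: "w \<notin> closed_nbhd n (a, b)"
    by (metis surj_pair)
  then have "(a, b) \<in> C" and adj: "grid_adj n (i, j) (a, b)"
    using nu by (auto simp: I_set_def closed_nbhd_def)
  have "(a = i \<and> b \<noteq> j) \<or> ((a = i + 1 \<or> i = a + 1) \<and> b = j)" "b = 1 \<or> b = 2"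
    using adj by (simp_all add: grid_adj_iff)
  moreover have "(a, b) \<noteq> (i', j)" using \<open>(a, b) \<in> C\<close> ni' by blast
  ultimately have "a = i \<and> b = j' \<or> a = k \<and> b = j"
    using j' i' u unfolding k_def mem_grid_vertices_iff by auto
  then have "w \<in> closed_nbhd n (a, b)"
    using adj j' k by (auto simp: w_def mem_closed_nbhd_iff grid_adj_iff)
  with wN show False ..
qed

lemma card_ge_if_gaps_followed:
  fixes S :: "nat set"
  assumes "S \<subseteq> {1..n}" "1 \<in> S" "\<And>i. i \<in> {1..n} - S \<Longrightarrow> Suc i \<in> S"
  shows "n + 1 \<le> 2 * card S"
proof -
  have fin: "finite S" using assms(1) finite_subset by blast
  have "card ({1..n} - S) = card (Suc ` ({1..n} - S))" by (simp add: card_image)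
  also have "\<dots> \<le> card (S - {1})"
    using assms(3) fin by (intro card_mono) auto
  finally have "n - card S \<le> card S - 1"
    using assms(1,2) by (simp add: card_Diff_subset finite_subset)
  moreover have "card S \<le> n" using card_mono[OF _ assms(1)] by simp
  moreover have "card S \<ge> 1"
    using assms(2) fin by (metis One_nat_def Suc_leI card_gt_0_iff empty_iff)
  ultimately show ?thesis by linarith
qed

lemma card_grid_subset_rows:
  assumes "C \<subseteq> grid_vertices n"
  shows "card C = card {i. (i, 1) \<in> C} + card {i. (i, 2) \<in> C}"
proof -
  have rows: "C = (\<lambda>i. (i, 1)) ` {i. (i, 1) \<in> C} \<union> (\<lambda>i. (i, 2)) ` {i. (i, 2) \<in> C}"
  proof (intro equalityI subsetI)
    fix c assume "c \<in> C"
    moreover obtain i j where c: "c = (i, j)" by fastforce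
    ultimately have "(i, j) \<in> grid_vertices n" using assms by blast
    then have "j = 1 \<or> j = 2" by simp
    with c \<open>c \<in> C\<close> show "c \<in> (\<lambda>i. (i, 1)) ` {i. (i, 1) \<in> C} \<union> (\<lambda>i. (i, 2)) ` {i. (i, 2) \<in> C}"
      by auto
  qed blast
  have "finite {i. (i, j) \<in> C}" for j
  proof (rule finite_subset[of _ "{1..n}"])
    show "{i. (i, j) \<in> C} \<subseteq> {1..n}" using assms by (auto dest: subsetD)
  qed simp
  then show ?thesis
    by (subst rows, subst card_Un_disjoint) (auto simp: card_image inj_on_def)
qed

theorem mainTheorem16:
  fixes n :: nat and C :: "(nat \<times> nat) set"
  assumes "n \<ge> 2" and "self_locating_dominating n C"
  shows "(1,1) \<in> C \<and> (1,2) \<in> C \<and> (n,1) \<in> C \<and> (n,2) \<in> C \<and> card C \<ge> n + 1"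
proof -
  have CV: "C \<subseteq> grid_vertices n" using assms(2) by (simp add: self_locating_dominating_def)
  note neighbour = sld_row_neighbour_in_code[OF assms(2)]
  have ends: "(1, j) \<in> C \<and> (n, j) \<in> C" if "j = 1 \<or> j = 2" for j
  proof -
    have "(0, j) \<notin> C" "(n + 1, j) \<notin> C" using CV by (auto dest: subsetD)
    then show ?thesis using neighbour[of 1 j 0] neighbour[of n j "n + 1"] that assms(1) by auto
  qed
  have row: "n + 1 \<le> 2 * card {i. (i, j) \<in> C}" if "j = 1 \<or> j = 2" for j
  proof (rule card_ge_if_gaps_followed)
    show "{i. (i, j) \<in> C} \<subseteq> {1..n}" "1 \<in> {i. (i, j) \<in> C}"
      using CV ends[OF that] by (auto dest: subsetD)
    show "Suc i \<in> {i. (i, j) \<in> C}" if "i \<in> {1..n} - {i. (i, j) \<in> C}" for i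
      using neighbour[of i j "i + 1"] that \<open>j = 1 \<or> j = 2\<close> by auto
  qed
  have "n + 1 \<le> card C"
    using row[of 1] row[of 2] card_grid_subset_rows[OF CV] by linarith
  with ends show ?thesis by auto
qed

end
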